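(* Let $\alpha_1,\dots,\alpha_n,\alpha'_1,\dots,\alpha'_n\in\mathcal R^n$ be such that the representations $\bigoplus_{i=1}^n\chi^{\alpha_i}$ and $\bigoplus_{i=1}^n\chi^{\alpha'_i}$ of $(\mathbb C^* )^n$ on $\mathbb C^n$ are faithful, and let $\{\beta_i\}$ (resp. $\{\beta'_i\}$) be dual to $\{\alpha_i\}$ (resp. $\{\alpha'_i\}$), i.e. $\langle\alpha_i,\beta_j\rangle=\delta_{ij}\mathbf 1$. (1) The two representation spaces are equivariantly diffeomorphic if and only if there is a permutation $\sigma$ of $\{1,\dots,n\}$ such that $\beta'_{\sigma(i)}=\beta_i$ or $\beta'_{\sigma(i)}=\beta_i\mu_0$ for every $i$, where $\mu_0=\begin{bmatrix}1&0\\0&-1\end{bmatrix}$. (2) The two representation spaces are equivariantly homeomorphic if and only if there are a permutation $\sigma$ of $\{1,\dots,n\}$ and elements $\mu_i\in\mathcal S:=\{\begin{bmatrix} b&0\\ c&v\end{bmatrix}\in\mathcal R: b>0,\ v=\pm1\}$ such that $\beta'_{\sigma(i)}=\beta_i\mu_i$ for every $i$.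
   Context: $\mathcal R$ is the ring of real $2\times2$ matrices $\begin{bmatrix} b&0\\ c&v\end{bmatrix}$ with $b,c\in\mathbb R$, $v\in\mathbb Z$, identified with $\mathbb C\times\mathbb Z$ via $(b+\sqrt{-1}c,v)$; $\mathbf 1$ is the identity matrix. For $g\in\mathbb C^*$ and $\mu=(b+\sqrt{-1}c,v)$, $g^\mu:=|g|^{b+\sqrt{-1}c}(g/|g|)^v$; then $(g^{\mu_1})^{\mu_2}=g^{\mu_2\mu_1}$ (matrix product). For $\alpha=(\alpha^1,\dots,\alpha^n)$, $\beta=(\beta^1,\dots,\beta^n)\in\mathcal R^n$: $\chi^\alpha(g_1,\dots,g_n)=\prod_k g_k^{\alpha^k}$, $\langle\alpha,\beta\rangle=\sum_k\alpha^k\beta^k\in\mathcal R$, and $\beta\mu=(\beta^1\mu,\dots,\beta^n\mu)$ for $\mu\in\mathcal R$. The representation $\bigoplus_i\chi^{\alpha_i}$ acts on $\mathbb C^n$ by $g\cdot(z_1,\dots,z_n)=(\chi^{\alpha_1}(g)z_1,\dots,\chi^{\alpha_n}(g)z_n)$; a dual set exists when the representation is faithful. *)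

theory Defs
  imports "HOL-Analysis.Analysis"
begin

text \<open>Elements of the ring R: the matrix [b 0; c v] is encoded as (b + i c, v).\<close>
type_synonym rr = "complex \<times> int"

definition rmult :: "rr \<Rightarrow> rr \<Rightarrow> rr" where
  "rmult x y = (Complex (Re (fst x) * Re (fst y))
                        (Im (fst x) * Re (fst y) + of_int (snd x) * Im (fst y)),
                snd x * snd y)"

definition radd :: "rr \<Rightarrow> rr \<Rightarrow> rr" where
  "radd x y = (fst x + fst y, snd x + snd y)"

definition rzero :: rr where "rzero = (0, 0)"
definition rone :: rr where "rone = (1, 1)"

definition mu0 :: rr where "mu0 = (1, -1)"

definition Sset :: "rr set" where
  "Sset = {x. Re (fst x) > 0 \<and> (snd x = 1 \<or> snd x = -1)}"

definition cpow :: "complex \<Rightarrow> rr \<Rightarrow> complex" where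
  "cpow g mu = exp (fst mu * complex_of_real (ln (norm g))) * (sgn g) powi (snd mu)"

definition rinner :: "rr^'n::finite \<Rightarrow> rr^'n \<Rightarrow> rr" where
  "rinner a b = ((\<Sum>k\<in>UNIV. fst (rmult (a$k) (b$k))), (\<Sum>k\<in>UNIV. snd (rmult (a$k) (b$k))))"

definition rvmult :: "rr^'n \<Rightarrow> rr \<Rightarrow> rr^'n" where
  "rvmult b mu = (\<chi> k. rmult (b$k) mu)"

definition chr :: "rr^'n::finite \<Rightarrow> complex^'n \<Rightarrow> complex" where
  "chr a g = (\<Prod>k\<in>UNIV. cpow (g$k) (a$k))"

definition torus :: "(complex^'n) set" where
  "torus = {g. \<forall>k. g$k \<noteq> 0}"

definition act :: "(rr^'n::finite)^'n \<Rightarrow> complex^'n \<Rightarrow> complex^'n \<Rightarrow> complex^'n" where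
  "act A g z = (\<chi> i. chr (A$i) g * z$i)"

definition faithful :: "(rr^'n::finite)^'n \<Rightarrow> bool" where
  "faithful A \<longleftrightarrow> (\<forall>g\<in>torus. (\<forall>z. act A g z = z) \<longrightarrow> g = 1)"

definition dual :: "(rr^'n::finite)^'n \<Rightarrow> (rr^'n)^'n \<Rightarrow> bool" where
  "dual A B \<longleftrightarrow> (\<forall>i j. rinner (A$i) (B$j) = (if i = j then rone else rzero))"

definition equivariant :: "(rr^'n::finite)^'n \<Rightarrow> (rr^'n)^'n \<Rightarrow> (complex^'n \<Rightarrow> complex^'n) \<Rightarrow> bool" where
  "equivariant A A' f \<longleftrightarrow> (\<forall>g\<in>torus. \<forall>z. f (act A g z) = act A' g (f z))"

fun Ck :: "nat \<Rightarrow> ('a::real_normed_vector \<Rightarrow> 'b::real_normed_vector) \<Rightarrow> bool" where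
  "Ck 0 f = continuous_on UNIV f"
| "Ck (Suc k) f = ((\<forall>x. f differentiable (at x)) \<and>
                    (\<forall>v. Ck k (\<lambda>x. frechet_derivative f (at x) v)))"

definition smooth :: "('a::real_normed_vector \<Rightarrow> 'b::real_normed_vector) \<Rightarrow> bool" where
  "smooth f \<longleftrightarrow> (\<forall>k. Ck k f)"

definition equiv_diffeomorphic :: "(rr^'n::finite)^'n \<Rightarrow> (rr^'n)^'n \<Rightarrow> bool" where
  "equiv_diffeomorphic A A' \<longleftrightarrow>
     (\<exists>f h. smooth f \<and> smooth h \<and> (\<forall>x. h (f x) = x) \<and> (\<forall>y. f (h y) = y) \<and> equivariant A A' f)"

definition equiv_homeomorphic :: "(rr^'n::finite)^'n \<Rightarrow> (rr^'n)^'n \<Rightarrow> bool" where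
  "equiv_homeomorphic A A' \<longleftrightarrow>
     (\<exists>f h. homeomorphism UNIV UNIV f h \<and> equivariant A A' f)"

end

theory Submission
  imports Defs
begin

text \<open>
  For \<open>b \<in> R\<^sup>n\<close> the one-parameter subgroup \<open>cochar b t = (t^b\<^sub>1, ..., t^b\<^sub>n)\<close> satisfies
  \<open>chr a (cochar b t) = t^\<langle>a, b\<rangle>\<close>. Duality and faithfulness make every torus element \<open>g\<close> the
  product of the \<open>cochar \<beta>\<^sub>j (chr \<alpha>\<^sub>j g)\<close>, hence \<open>chr \<alpha>'\<^sub>k = \<Prod>\<^sub>j (chr \<alpha>\<^sub>j)^P\<^sub>k\<^sub>j\<close>
  with \<open>P\<^sub>k\<^sub>j = \<langle>\<alpha>'\<^sub>k, \<beta>\<^sub>j\<rangle>\<close>.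

  If \<open>\<beta>'\<^sub>\<sigma>\<^sub>j = \<beta>\<^sub>j \<mu>\<^sub>j\<close> with units \<open>\<mu>\<^sub>j\<close> of R, then \<open>P\<close> is monomial with entries
  \<open>\<nu>\<^sub>j = \<mu>\<^sub>j\<^sup>-\<^sup>1\<close>, and raising the \<open>j\<close>-th coordinate to the power \<open>\<nu>\<^sub>j\<close> and moving it to
  place \<open>\<sigma> j\<close> is equivariant. This map is a homeomorphism when all \<open>\<mu>\<^sub>j \<in> S\<close>, and real-linear
  (identity or conjugation in each coordinate) when all \<open>\<mu>\<^sub>j \<in> {1, \<mu>\<^sub>0}\<close>.

  Conversely, for \<open>i \<noteq> j\<close> the subgroup \<open>cochar \<beta>\<^sub>i\<close> fixes the \<open>j\<close>-th coordinate axis pointwise,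
  so an equivariant injection \<open>f\<close> maps it into coordinates on which \<open>cochar \<beta>\<^sub>i\<close> acts trivially.
  This forces \<open>P\<close> to be monomial, with invertible entries since \<open>P\<close> times \<open>(\<langle>\<alpha>\<^sub>j, \<beta>'\<^sub>l\<rangle>)\<close> is
  the identity, and \<open>f (s e\<^sub>j) = c\<^sub>j s^\<nu>\<^sub>j e\<^sub>\<sigma>\<^sub>j\<close>. Continuity of \<open>f\<close> at 0 forces \<open>Re \<nu>\<^sub>j > 0\<close>;
  differentiability of \<open>f\<close> and \<open>f\<^sup>-\<^sup>1\<close> at 0 makes \<open>s \<mapsto> s^\<nu>\<^sub>j\<close> real-linear, i.e. \<open>\<nu>\<^sub>j \<in> {1, \<mu>\<^sub>0}\<close>.
\<close>

section \<open>The ring R\<close>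

lemma rzero_eq_0: "rzero = 0"
  by (simp add: rzero_def zero_prod_def)

lemma rmult_assoc: "rmult (rmult x y) z = rmult x (rmult y z)"
  by (simp add: rmult_def complex_eq_iff algebra_simps)

lemma rmult_rone [simp]: "rmult x rone = x" "rmult rone x = x"
  by (simp_all add: rmult_def rone_def complex_eq_iff)

lemma rmult_rzero [simp]: "rmult x rzero = rzero" "rmult rzero x = rzero"
  by (simp_all add: rmult_def rzero_def complex_eq_iff)

lemma rmult_add_left: "rmult (x + y) m = rmult x m + rmult y m"
  by (simp add: rmult_def prod_eq_iff complex_eq_iff algebra_simps)

lemma rmult_sum_left: "rmult (\<Sum>j\<in>A. F j) m = (\<Sum>j\<in>A. rmult (F j) m)"
  by (induction A rule: infinite_finite_induct) (simp_all add: rmult_add_left flip: rzero_eq_0)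

lemma rinner_eq_sum: "rinner a b = (\<Sum>k\<in>UNIV. rmult (a$k) (b$k))"
  by (simp add: rinner_def prod_eq_iff fst_sum snd_sum)

lemma rinner_rvmult: "rinner a (rvmult b m) = rmult (rinner a b) m"
  by (simp add: rinner_eq_sum rvmult_def rmult_sum_left rmult_assoc)

lemma rvmult_rone [simp]: "rvmult b rone = b"
  by (simp add: rvmult_def vec_eq_iff)

lemma mu0_mu0 [simp]: "rmult mu0 mu0 = rone"
  by (simp add: rmult_def mu0_def rone_def complex_eq_iff)

lemma rmult_right_inverse_imp_left:
  assumes "rmult x y = rone"
  shows "rmult y x = rone"
proof -
  have re: "Re (fst x) * Re (fst y) = 1"
    and im: "Im (fst x) * Re (fst y) + of_int (snd x) * Im (fst y) = 0"
    and v: "snd x * snd y = 1"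
    using assms by (auto simp: rmult_def rone_def complex_eq_iff)
  have vv: "snd y = snd x" "of_int (snd x) * of_int (snd x) = (1::real)"
    using v by (auto simp: zmult_eq_1_iff)
  have "Im (fst y) * Re (fst x) + of_int (snd y) * Im (fst x)
      = of_int (snd x) * Re (fst x) * (Im (fst x) * Re (fst y) + of_int (snd x) * Im (fst y))"
    using re vv by (simp add: algebra_simps)
  then show ?thesis
    using re v im by (simp add: rmult_def rone_def complex_eq_iff mult.commute)
qed

lemma Sset_invertible: "x \<in> Sset \<Longrightarrow> \<exists>y. rmult x y = rone"
proof -
  assume "x \<in> Sset"
  then have "rmult x (Complex (1 / Re (fst x)) (- Im (fst x) / (Re (fst x) * of_int (snd x))), snd x) = rone"
    by (auto simp: Sset_def rmult_def rone_def complex_eq_iff field_simps)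
  then show ?thesis ..
qed

lemma Sset_iff_Re_inverse_pos:
  assumes "rmult x y = rone"
  shows "x \<in> Sset \<longleftrightarrow> Re (fst y) > 0"
proof -
  have "Re (fst x) * Re (fst y) = 1" "snd x * snd y = 1"
    using assms by (auto simp: rmult_def rone_def complex_eq_iff)
  moreover have "0 < Re (fst x) \<longleftrightarrow> 0 < Re (fst y)"
    using calculation(1) zero_less_mult_iff[of "Re (fst x)" "Re (fst y)"] by auto
  ultimately show ?thesis
    by (auto simp: Sset_def zmult_eq_1_iff)
qed

lemma rmult_eq_rone_fst_1:
  assumes "rmult x y = rone" and "fst x = 1"
  shows "y = rone \<or> y = mu0"
  using assms by (auto simp: rmult_def rone_def mu0_def complex_eq_iff prod_eq_iff zmult_eq_1_iff)

section \<open>Complex powers with exponents in R\<close>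

lemma cpow_exp_Complex:
  "cpow (exp (Complex a t)) m = exp (fst m * of_real a + \<i> * (of_int (snd m) * of_real t))"
proof -
  have polar: "exp (Complex a t) = of_real (exp a) * cis t"
    by (simp add: exp_eq_polar)
  have "norm (exp (Complex a t)) = exp a"
    by simp
  moreover have "sgn (exp (Complex a t)) = cis t"
    unfolding polar by (simp add: sgn_mult sgn_of_real)
  ultimately have "cpow (exp (Complex a t)) m = exp (fst m * of_real a) * cis (of_int (snd m) * t)"
    by (simp add: cpow_def cis_power_int)
  then show ?thesis
    by (simp add: cis_conv_exp exp_add)
qed

lemma exp_Complex_ln_norm_Arg: "g \<noteq> 0 \<Longrightarrow> exp (Complex (ln (norm g)) (Arg g)) = g"
  using rcis_cmod_Arg[of g] by (simp add: exp_eq_polar rcis_def)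

lemma cpow_nonzero: "g \<noteq> 0 \<Longrightarrow> cpow g m \<noteq> 0"
  by (simp add: cpow_def sgn_eq_0_iff)

lemma cpow_zero [simp]: "cpow g 0 = 1" "cpow g rzero = 1"
  by (simp_all add: cpow_def rzero_def)

lemma cpow_one_base [simp]: "cpow 1 m = 1"
  by (simp add: cpow_def)

lemma cpow_rone: "g \<noteq> 0 \<Longrightarrow> cpow g rone = g"
  by (simp add: cpow_def rone_def complex_sgn_def scaleR_conv_of_real exp_of_real)

lemma cpow_mult: "g \<noteq> 0 \<Longrightarrow> h \<noteq> 0 \<Longrightarrow> cpow (g * h) m = cpow g m * cpow h m"
  by (simp add: cpow_def norm_mult ln_mult sgn_mult power_int_mult_distrib distrib_left exp_add)

lemma cpow_prod:
  "(\<And>j. j \<in> A \<Longrightarrow> F j \<noteq> 0) \<Longrightarrow> cpow (\<Prod>j\<in>A. F j) m = (\<Prod>j\<in>A. cpow (F j) m)"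
  by (induction A rule: infinite_finite_induct) (simp_all add: cpow_mult)

lemma cpow_add: "g \<noteq> 0 \<Longrightarrow> cpow g (x + y) = cpow g x * cpow g y"
  by (simp add: cpow_def sgn_eq_0_iff power_int_add distrib_right exp_add)

lemma cpow_sum: "g \<noteq> 0 \<Longrightarrow> cpow g (\<Sum>j\<in>A. F j) = (\<Prod>j\<in>A. cpow g (F j))"
  by (induction A rule: infinite_finite_induct) (simp_all add: cpow_add)

lemma cpow_cpow:
  assumes "g \<noteq> 0"
  shows "cpow (cpow g m1) m2 = cpow g (rmult m2 m1)"
proof -
  define a t where "a = ln (norm g)" and "t = Arg g"
  have g: "g = exp (Complex a t)"
    using exp_Complex_ln_norm_Arg[OF assms] by (simp add: a_def t_def)
  define w where "w = fst m1 * of_real a + \<i> * (of_int (snd m1) * of_real t)"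
  have "cpow g m1 = exp (Complex (Re w) (Im w))"
    unfolding complex_surj g cpow_exp_Complex w_def ..
  then have "cpow (cpow g m1) m2 = exp (fst m2 * of_real (Re w) + \<i> * (of_int (snd m2) * of_real (Im w)))"
    by (simp only: cpow_exp_Complex)
  also have "\<dots> = exp (fst (rmult m2 m1) * of_real a + \<i> * (of_int (snd (rmult m2 m1)) * of_real t))"
    by (rule arg_cong[where f = exp]) (simp add: w_def rmult_def complex_eq_iff algebra_simps)
  also have "\<dots> = cpow g (rmult m2 m1)"
    unfolding g cpow_exp_Complex ..
  finally show ?thesis .
qed

lemma exp_mult_of_real_eq_1_imp_zero:
  fixes z :: complex
  assumes "\<And>s::real. exp (z * of_real s) = 1"
  shows "z = 0"
proof (rule ccontr)
  assume "z \<noteq> 0"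
  moreover have "Re z = 0"
    using assms[of 1] by (simp add: exp_eq_1)
  ultimately have "Im z \<noteq> 0"
    by (simp add: complex_eq_iff)
  obtain n :: int where "Im (z * of_real (pi / Im z)) = of_int (2 * n) * pi"
    using assms[of "pi / Im z"] by (auto simp: exp_eq_1)
  with \<open>Im z \<noteq> 0\<close> have "(1::int) = 2 * n"
    by (simp flip: of_int_eq_1_iff)
  then show False
    by presburger
qed

text \<open>Test the two power functions on \<open>exp s\<close> and on \<open>exp (\<i> s)\<close> for real \<open>s\<close>.\<close>

lemma cpow_exponent_inj:
  assumes "\<And>t. t \<noteq> 0 \<Longrightarrow> cpow t m = cpow t m'"
  shows "m = m'"
proof -
  have "exp ((fst m - fst m') * of_real s) = 1" for s
    using assms[of "exp (Complex s 0)"] by (simp add: cpow_exp_Complex left_diff_distrib exp_diff)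
  then have "fst m = fst m'"
    using exp_mult_of_real_eq_1_imp_zero[of "fst m - fst m'"] by simp
  moreover have "exp ((\<i> * (of_int (snd m) - of_int (snd m'))) * of_real s) = 1" for s
    using assms[of "exp (Complex 0 s)"] by (simp add: cpow_exp_Complex algebra_simps exp_diff)
  then have "\<i> * (of_int (snd m) - of_int (snd m')) = (0::complex)"
    by (rule exp_mult_of_real_eq_1_imp_zero)
  then have "snd m = snd m'"
    by simp
  ultimately show ?thesis
    by (simp add: prod_eq_iff)
qed

lemma norm_cpow: "g \<noteq> 0 \<Longrightarrow> norm (cpow g m) = norm g powr Re (fst m)"
  by (simp add: cpow_def norm_mult norm_power_int norm_sgn powr_def)

lemma cpow_of_real_pos: "0 < r \<Longrightarrow> cpow (of_real r) m = exp (fst m * of_real (ln r))"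
  by (simp add: cpow_def sgn_of_real)

section \<open>Characters and one-parameter subgroups\<close>

definition cochar :: "rr^'n \<Rightarrow> complex \<Rightarrow> complex^'n" where
  "cochar b t = (\<chi> k. cpow t (b$k))"

lemma cochar_in_torus: "t \<noteq> 0 \<Longrightarrow> cochar b t \<in> torus"
  by (simp add: cochar_def torus_def cpow_nonzero)

lemma chr_nonzero: "g \<in> torus \<Longrightarrow> chr a g \<noteq> 0"
  by (simp add: chr_def torus_def cpow_nonzero)

lemma chr_cochar: "t \<noteq> 0 \<Longrightarrow> chr a (cochar b t) = cpow t (rinner a b)"
  by (simp add: chr_def cochar_def cpow_cpow rinner_eq_sum cpow_sum)

lemma chr_cochar_dual:
  "dual A B \<Longrightarrow> t \<noteq> 0 \<Longrightarrow> chr (A$i) (cochar (B$j) t) = (if i = j then t else 1)"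
  by (simp add: chr_cochar dual_def cpow_rone)

lemma chr_mult: "g \<in> torus \<Longrightarrow> h \<in> torus \<Longrightarrow> chr a (\<chi> k. g$k * h$k) = chr a g * chr a h"
  by (simp add: chr_def torus_def cpow_mult prod.distrib)

lemma chr_prod:
  assumes "\<And>j. j \<in> J \<Longrightarrow> F j \<in> torus"
  shows "chr a (\<chi> k. \<Prod>j\<in>J. F j $ k) = (\<Prod>j\<in>J. chr a (F j))"
proof -
  have "chr a (\<chi> k. \<Prod>j\<in>J. F j $ k) = (\<Prod>k\<in>UNIV. \<Prod>j\<in>J. cpow (F j $ k) (a$k))"
    using assms by (simp add: chr_def cpow_prod torus_def)
  also have "\<dots> = (\<Prod>j\<in>J. chr a (F j))"
    unfolding chr_def by (rule prod.swap)
  finally show ?thesis .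
qed

lemma act_nth [simp]: "act A g z $ k = chr (A$k) g * z$k"
  by (simp add: act_def)

lemma faithful_chr_inj:
  assumes "faithful A" "g \<in> torus" "h \<in> torus" "\<And>i. chr (A$i) g = chr (A$i) h"
  shows "g = h"
proof -
  define q where "q = (\<chi> k. g$k / h$k)"
  have q: "q \<in> torus" and qh: "(\<chi> k. q$k * h$k) = g"
    using assms(2,3) by (simp_all add: q_def torus_def vec_eq_iff)
  have "chr (A$i) q = 1" for i
    using chr_mult[OF q assms(3), of "A$i"] assms(4)[of i] chr_nonzero[OF assms(3), of "A$i"]
    by (simp add: qh)
  then have "q = 1"
    using assms(1) q unfolding faithful_def by (simp add: act_def vec_eq_iff)
  then show ?thesis
    using assms(3) by (simp add: q_def vec_eq_iff torus_def)
qed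

lemma torus_eq_prod_cochar:
  assumes "faithful A" "dual A B" "g \<in> torus"
  shows "g = (\<chi> k. \<Prod>j\<in>UNIV. cochar (B$j) (chr (A$j) g) $ k)"
proof (rule faithful_chr_inj[OF assms(1,3)])
  have factors: "cochar (B$j) (chr (A$j) g) \<in> torus" for j
    by (rule cochar_in_torus[OF chr_nonzero[OF assms(3)]])
  then show "(\<chi> k. \<Prod>j\<in>UNIV. cochar (B$j) (chr (A$j) g) $ k) \<in> torus"
    by (auto simp: torus_def)
  fix i
  have "chr (A$i) (\<chi> k. \<Prod>j\<in>UNIV. cochar (B$j) (chr (A$j) g) $ k)
      = (\<Prod>j\<in>UNIV. if i = j then chr (A$j) g else 1)"
    using assms(2) by (simp add: chr_prod factors chr_cochar_dual chr_nonzero[OF assms(3)])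
  then show "chr (A$i) g = chr (A$i) (\<chi> k. \<Prod>j\<in>UNIV. cochar (B$j) (chr (A$j) g) $ k)"
    by simp
qed

lemma chr_eq_prod_cpow:
  assumes "faithful A" "dual A B" "g \<in> torus"
  shows "chr c g = (\<Prod>j\<in>UNIV. cpow (chr (A$j) g) (rinner c (B$j)))"
proof -
  have "chr c g = chr c (\<chi> k. \<Prod>j\<in>UNIV. cochar (B$j) (chr (A$j) g) $ k)"
    using torus_eq_prod_cochar[OF assms] by simp
  also have "\<dots> = (\<Prod>j\<in>UNIV. cpow (chr (A$j) g) (rinner c (B$j)))"
    by (simp add: chr_prod cochar_in_torus chr_cochar chr_nonzero[OF assms(3)])
  finally show ?thesis .
qed

lemma faithful_rinner_inj:
  assumes "faithful A" and "\<And>k. rinner (A$k) x = rinner (A$k) y"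
  shows "x = y"
proof -
  have "cochar x t = cochar y t" if t: "t \<noteq> 0" for t
  proof (rule faithful_chr_inj[OF assms(1) cochar_in_torus[OF t] cochar_in_torus[OF t]])
    show "chr (A$i) (cochar x t) = chr (A$i) (cochar y t)" for i
      by (simp only: chr_cochar[OF t] assms(2))
  qed
  then have "cpow t (x$k) = cpow t (y$k)" if "t \<noteq> 0" for t k
    using that by (simp add: cochar_def vec_eq_iff)
  then show ?thesis
    unfolding vec_eq_iff by (blast intro: cpow_exponent_inj)
qed

lemma dual_pairings_inverse:
  assumes "faithful A" "dual A B" "dual A' B'"
  shows "(\<Sum>j\<in>UNIV. rmult (rinner (A'$k) (B$j)) (rinner (A$j) (B'$l))) = (if k = l then rone else rzero)"
proof (rule cpow_exponent_inj)
  fix t :: complex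
  assume t: "t \<noteq> 0"
  have "cpow t (\<Sum>j\<in>UNIV. rmult (rinner (A'$k) (B$j)) (rinner (A$j) (B'$l)))
      = (\<Prod>j\<in>UNIV. cpow (chr (A$j) (cochar (B'$l) t)) (rinner (A'$k) (B$j)))"
    using t by (simp add: cpow_sum cpow_cpow chr_cochar)
  also have "\<dots> = chr (A'$k) (cochar (B'$l) t)"
    by (rule chr_eq_prod_cpow[OF assms(1,2) cochar_in_torus[OF t], symmetric])
  also have "\<dots> = cpow t (if k = l then rone else rzero)"
    using t assms(3) by (simp add: chr_cochar_dual cpow_rone)
  finally show "cpow t (\<Sum>j\<in>UNIV. rmult (rinner (A'$k) (B$j)) (rinner (A$j) (B'$l)))
      = cpow t (if k = l then rone else rzero)" .
qed

section \<open>Monomial maps\<close>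

text \<open>\<open>cpow 0 m\<close> is a junk value; equivariant maps fix the origin, so power maps are extended by 0.\<close>

definition cpow0 :: "complex \<Rightarrow> rr \<Rightarrow> complex" where
  "cpow0 w m = (if w = 0 then 0 else cpow w m)"

lemma cpow0_mult: "g \<noteq> 0 \<Longrightarrow> cpow0 (g * w) m = cpow g m * cpow0 w m"
  by (simp add: cpow0_def cpow_mult)

lemma cpow0_cpow0: "cpow0 (cpow0 w a) b = cpow0 w (rmult b a)"
  by (simp add: cpow0_def cpow_nonzero cpow_cpow)

lemma cpow0_rone [simp]: "cpow0 w rone = w"
  by (simp add: cpow0_def cpow_rone)

lemma cpow0_mu0 [simp]: "cpow0 w mu0 = cnj w"
proof (cases "w = 0")
  case False
  have "cpow w mu0 = of_real (norm w) * inverse (sgn w)"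
    using False by (simp add: cpow_def mu0_def exp_of_real power_int_minus)
  also have "\<dots> = cnj w"
    using False complex_norm_square[of w]
    by (simp add: complex_sgn_def scaleR_conv_of_real field_simps power2_eq_square)
  finally show ?thesis
    using False by (simp add: cpow0_def)
qed (simp add: cpow0_def)

lemma continuous_on_cpow0:
  assumes "Re (fst m) > 0"
  shows "continuous_on UNIV (\<lambda>w. cpow0 w m)"
proof -
  have "isCont (\<lambda>w. cpow0 w m) w" for w
  proof (cases "w = 0")
    case True
    have "((\<lambda>w. norm w powr Re (fst m)) \<longlongrightarrow> 0) (at (0::complex))"
      by (rule tendsto_zero_powrI) (auto intro!: tendsto_eq_intros assms)
    then have "((\<lambda>w. norm (cpow0 w m)) \<longlongrightarrow> 0) (at (0::complex))"
      by (rule Lim_transform_eventually) (auto simp: cpow0_def norm_cpow eventually_at_filter)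
    then show ?thesis
      using True by (simp add: isCont_def cpow0_def tendsto_norm_zero_iff)
  next
    case False
    have "\<forall>\<^sub>F x in nhds w. cpow0 x m = exp (fst m * of_real (ln (norm x))) * sgn x powi (snd m)"
      using t1_space_nhds[OF False] by eventually_elim (simp add: cpow0_def cpow_def)
    moreover have "isCont (\<lambda>x. exp (fst m * of_real (ln (norm x))) * sgn x powi (snd m)) w"
      using False by (intro continuous_intros continuous_power_int isCont_sgn) (auto simp: sgn_eq_0_iff)
    ultimately show ?thesis
      by (simp add: isCont_cong)
  qed
  then show ?thesis
    by (simp add: continuous_on_eq_continuous_at)
qed

lemma isCont_cpow0_imp_Re_pos:
  assumes "isCont (\<lambda>w. cpow0 w m) 0"
  shows "Re (fst m) > 0"
proof (rule ccontr)
  assume "\<not> Re (fst m) > 0"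
  have "((\<lambda>r. cpow0 (of_real r) m) \<longlongrightarrow> cpow0 0 m) (at_right 0)"
    by (rule isCont_tendsto_compose[OF assms]) (auto intro!: tendsto_eq_intros)
  then have "((\<lambda>r. norm (cpow0 (of_real r) m)) \<longlongrightarrow> 0) (at_right 0)"
    by (simp add: cpow0_def tendsto_norm_zero_iff)
  moreover have "\<forall>\<^sub>F r in at_right 0. 1 \<le> norm (cpow0 (of_real r) m)"
  proof (rule eventually_at_rightI[of 0 1])
    fix r :: real
    assume "r \<in> {0<..<1}"
    then have "0 \<le> Re (fst m) * ln r"
      using \<open>\<not> Re (fst m) > 0\<close> by (simp add: mult_nonpos_nonpos)
    then show "1 \<le> norm (cpow0 (of_real r) m)"
      using \<open>r \<in> {0<..<1}\<close> by (simp add: cpow0_def norm_cpow powr_def)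
  qed simp
  ultimately have "1 \<le> (0::real)"
    by (rule tendsto_lowerbound) simp
  then show False
    by simp
qed

definition monomial_map :: "('n \<Rightarrow> 'n) \<Rightarrow> ('n \<Rightarrow> rr) \<Rightarrow> complex^'n \<Rightarrow> complex^'n" where
  "monomial_map \<sigma> \<nu> z = (\<chi> k. cpow0 (z $ inv \<sigma> k) (\<nu> (inv \<sigma> k)))"

lemma monomial_map_inverse:
  assumes "\<sigma> permutes UNIV" and "\<And>j. rmult (\<mu> j) (\<nu> j) = rone"
  shows "monomial_map (inv \<sigma>) (\<mu> \<circ> inv \<sigma>) (monomial_map \<sigma> \<nu> z) = z"
    and "monomial_map \<sigma> \<nu> (monomial_map (inv \<sigma>) (\<mu> \<circ> inv \<sigma>) w) = w"
  using assms rmult_right_inverse_imp_left[OF assms(2)]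
  by (simp_all add: monomial_map_def vec_eq_iff cpow0_cpow0 permutes_inv_inv permutes_inverses)

lemma continuous_on_monomial_map:
  "(\<And>j. Re (fst (\<nu> j)) > 0) \<Longrightarrow> continuous_on UNIV (monomial_map \<sigma> \<nu>)"
  unfolding monomial_map_def
  by (intro continuous_on_vec_lambda continuous_on_compose2[OF continuous_on_cpow0]
      continuous_on_component continuous_on_id) auto

lemma linear_monomial_map:
  assumes "\<And>j. \<nu> j = rone \<or> \<nu> j = mu0"
  shows "linear (monomial_map \<sigma> \<nu>)"
proof -
  have "cpow0 (x + y) (\<nu> j) = cpow0 x (\<nu> j) + cpow0 y (\<nu> j)"
    and "cpow0 (r *\<^sub>R x) (\<nu> j) = r *\<^sub>R cpow0 x (\<nu> j)" for x y r j
    using assms[of j] by auto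
  then show ?thesis
    by (intro linearI) (simp_all add: monomial_map_def vec_eq_iff)
qed

lemma monomial_map_equivariant:
  fixes \<alpha> \<alpha>' \<beta> :: "(rr^'n::finite)^'n"
  assumes "faithful \<alpha>" "dual \<alpha> \<beta>" "\<sigma> permutes UNIV"
    and "\<And>k j. rinner (\<alpha>'$k) (\<beta>$j) = (if k = \<sigma> j then \<nu> j else rzero)"
  shows "equivariant \<alpha> \<alpha>' (monomial_map \<sigma> \<nu>)"
  unfolding equivariant_def
proof (intro ballI allI)
  fix g z :: "complex^'n"
  assume g: "g \<in> torus"
  have "chr (\<alpha>'$k) g = cpow (chr (\<alpha>$(inv \<sigma> k)) g) (\<nu> (inv \<sigma> k))" for k
  proof -
    have "chr (\<alpha>'$k) g = (\<Prod>j\<in>UNIV. cpow (chr (\<alpha>$j) g) (rinner (\<alpha>'$k) (\<beta>$j)))"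
      by (rule chr_eq_prod_cpow[OF assms(1,2) g])
    also have "\<dots> = (\<Prod>j\<in>UNIV. if j = inv \<sigma> k then cpow (chr (\<alpha>$j) g) (\<nu> j) else 1)"
      using assms(3) by (intro prod.cong) (auto simp: assms(4) permutes_inverses permutes_inv_eq)
    finally show ?thesis
      by simp
  qed
  then show "monomial_map \<sigma> \<nu> (act \<alpha> g z) = act \<alpha>' g (monomial_map \<sigma> \<nu> z)"
    by (simp add: monomial_map_def vec_eq_iff cpow0_mult chr_nonzero[OF g])
qed

lemma Ck_const: "Ck k (\<lambda>x::'a::real_normed_vector. c::'b::real_normed_vector)"
proof (induction k arbitrary: c)
  case (Suc k)
  have "frechet_derivative (\<lambda>x::'a. c) (at x) = (\<lambda>h. 0)" for x
    by (rule frechet_derivative_at[symmetric]) simp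
  then show ?case
    using Suc by simp
qed simp

lemma smooth_bounded_linear: "bounded_linear f \<Longrightarrow> smooth f"
proof -
  assume f: "bounded_linear f"
  have "frechet_derivative f (at x) = f" for x
    by (rule frechet_derivative_at[symmetric]) (rule bounded_linear_imp_has_derivative[OF f])
  then have "Ck k f" for k
    using f by (cases k) (simp_all add: linear_continuous_on Ck_const bounded_linear_imp_differentiable)
  then show ?thesis
    by (simp add: smooth_def)
qed

lemma smooth_imp_differentiable: "smooth f \<Longrightarrow> f differentiable (at x)"
  using Ck.simps(2)[of 0 f] by (simp add: smooth_def)

lemma rvmult_iff_monomial_pairing:
  fixes \<alpha>' \<beta> \<beta>' :: "(rr^'n::finite)^'n"
  assumes "faithful \<alpha>'" "dual \<alpha>' \<beta>'" and inverse: "\<And>j. rmult (\<nu> j) (\<mu> j) = rone"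
  shows "(\<forall>j. \<beta>'$(\<sigma> j) = rvmult (\<beta>$j) (\<mu> j))
    \<longleftrightarrow> (\<forall>k j. rinner (\<alpha>'$k) (\<beta>$j) = (if k = \<sigma> j then \<nu> j else rzero))"
proof
  assume rv: "\<forall>j. \<beta>'$(\<sigma> j) = rvmult (\<beta>$j) (\<mu> j)"
  show "\<forall>k j. rinner (\<alpha>'$k) (\<beta>$j) = (if k = \<sigma> j then \<nu> j else rzero)"
  proof (intro allI)
    fix k j
    have "rinner (\<alpha>'$k) (\<beta>$j) = rmult (rinner (\<alpha>'$k) (rvmult (\<beta>$j) (\<mu> j))) (\<nu> j)"
      by (simp add: rinner_rvmult rmult_assoc rmult_right_inverse_imp_left[OF inverse])
    also have "\<dots> = (if k = \<sigma> j then \<nu> j else rzero)"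
      using assms(2) by (simp add: rv[rule_format, symmetric] dual_def)
    finally show "rinner (\<alpha>'$k) (\<beta>$j) = (if k = \<sigma> j then \<nu> j else rzero)" .
  qed
next
  assume "\<forall>k j. rinner (\<alpha>'$k) (\<beta>$j) = (if k = \<sigma> j then \<nu> j else rzero)"
  then have "rinner (\<alpha>'$k) (\<beta>'$(\<sigma> j)) = rinner (\<alpha>'$k) (rvmult (\<beta>$j) (\<mu> j))" for k j
    using assms(2) inverse by (simp add: rinner_rvmult dual_def)
  then show "\<forall>j. \<beta>'$(\<sigma> j) = rvmult (\<beta>$j) (\<mu> j)"
    by (blast intro: faithful_rinner_inj[OF assms(1)])
qed

lemma monomial_map_equivariant_if_rvmult:
  fixes \<alpha> \<alpha>' \<beta> \<beta>' :: "(rr^'n::finite)^'n"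
  assumes "faithful \<alpha>" "faithful \<alpha>'" "dual \<alpha> \<beta>" "dual \<alpha>' \<beta>'" "\<sigma> permutes UNIV"
    and "\<And>j. rmult (\<mu> j) (\<nu> j) = rone" "\<And>j. \<beta>'$(\<sigma> j) = rvmult (\<beta>$j) (\<mu> j)"
  shows "equivariant \<alpha> \<alpha>' (monomial_map \<sigma> \<nu>)"
proof (rule monomial_map_equivariant[OF assms(1,3,5)])
  have "\<And>j. rmult (\<nu> j) (\<mu> j) = rone"
    by (rule rmult_right_inverse_imp_left[OF assms(6)])
  then show "rinner (\<alpha>'$k) (\<beta>$j) = (if k = \<sigma> j then \<nu> j else rzero)" for k j
    using rvmult_iff_monomial_pairing[OF assms(2,4)] assms(7) by blast
qed

lemma equiv_homeomorphic_if_rvmult_Sset: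
  fixes \<alpha> \<alpha>' \<beta> \<beta>' :: "(rr^'n::finite)^'n"
  assumes "faithful \<alpha>" "faithful \<alpha>'" "dual \<alpha> \<beta>" "dual \<alpha>' \<beta>'" "\<sigma> permutes UNIV"
    and "\<And>j. \<mu> j \<in> Sset" "\<And>j. \<beta>'$(\<sigma> j) = rvmult (\<beta>$j) (\<mu> j)"
  shows "equiv_homeomorphic \<alpha> \<alpha>'"
proof -
  obtain \<nu> where \<nu>: "\<And>j. rmult (\<mu> j) (\<nu> j) = rone"
    using Sset_invertible[OF assms(6)] by metis
  have "homeomorphism UNIV UNIV (monomial_map \<sigma> \<nu>) (monomial_map (inv \<sigma>) (\<mu> \<circ> inv \<sigma>))"
  proof (rule homeomorphismI)
    show "continuous_on UNIV (monomial_map \<sigma> \<nu>)"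
      using assms(6) Sset_iff_Re_inverse_pos[OF \<nu>] by (blast intro: continuous_on_monomial_map)
    show "continuous_on UNIV (monomial_map (inv \<sigma>) (\<mu> \<circ> inv \<sigma>))"
      using assms(6) by (intro continuous_on_monomial_map) (simp add: Sset_def)
  qed (simp_all add: monomial_map_inverse[OF assms(5) \<nu>])
  then show ?thesis
    unfolding equiv_homeomorphic_def
    using monomial_map_equivariant_if_rvmult[OF assms(1-5) \<nu> assms(7)] by blast
qed

lemma equiv_diffeomorphic_if_rvmult_mu0:
  fixes \<alpha> \<alpha>' \<beta> \<beta>' :: "(rr^'n::finite)^'n"
  assumes "faithful \<alpha>" "faithful \<alpha>'" "dual \<alpha> \<beta>" "dual \<alpha>' \<beta>'" "\<sigma> permutes UNIV"
    and "\<And>j. \<beta>'$(\<sigma> j) = \<beta>$j \<or> \<beta>'$(\<sigma> j) = rvmult (\<beta>$j) mu0"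
  shows "equiv_diffeomorphic \<alpha> \<alpha>'"
proof -
  define \<mu> where "\<mu> j = (if \<beta>'$(\<sigma> j) = \<beta>$j then rone else mu0)" for j
  have \<mu>_cases: "\<mu> j = rone \<or> \<mu> j = mu0" for j
    by (simp add: \<mu>_def)
  then have \<mu>\<mu>: "\<And>j. rmult (\<mu> j) (\<mu> j) = rone"
    by (metis mu0_mu0 rmult_rone(1))
  have "\<beta>'$(\<sigma> j) = rvmult (\<beta>$j) (\<mu> j)" for j
    using assms(6)[of j] by (auto simp: \<mu>_def)
  then have "equivariant \<alpha> \<alpha>' (monomial_map \<sigma> \<mu>)"
    by (rule monomial_map_equivariant_if_rvmult[OF assms(1-5) \<mu>\<mu>])
  moreover have "smooth (monomial_map \<sigma> \<mu>)" "smooth (monomial_map (inv \<sigma>) (\<mu> \<circ> inv \<sigma>))"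
    using \<mu>_cases by (simp_all add: smooth_bounded_linear linear_monomial_map
        flip: linear_conv_bounded_linear)
  ultimately show ?thesis
    unfolding equiv_diffeomorphic_def
    using monomial_map_inverse[where \<mu> = \<mu> and \<nu> = \<mu>, OF assms(5) \<mu>\<mu>] by blast
qed

section \<open>Equivariant injections are monomial\<close>

lemma equivariant_map_zero:
  fixes \<alpha> \<alpha>' \<beta>' :: "(rr^'n::finite)^'n"
  assumes "dual \<alpha>' \<beta>'" "equivariant \<alpha> \<alpha>' f"
  shows "f 0 = 0"
proof -
  have "f 0 $ k = 0" for k
  proof -
    have "cochar (\<beta>'$k) 2 \<in> torus"
      by (simp add: cochar_in_torus)
    then have "f 0 = act \<alpha>' (cochar (\<beta>'$k) 2) (f 0)"
      using assms(2) unfolding equivariant_def by (metis act_nth mult_zero_right vec_eq_iff zero_index)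
    then have "f 0 $ k = 2 * f 0 $ k"
      using assms(1) by (metis act_nth chr_cochar_dual zero_neq_numeral)
    then show ?thesis
      by simp
  qed
  then show ?thesis
    by (simp add: vec_eq_iff)
qed

lemma equivariant_axis_pairing_vanishes:
  fixes \<alpha> \<alpha>' \<beta> :: "(rr^'n::finite)^'n"
  assumes "dual \<alpha> \<beta>" "equivariant \<alpha> \<alpha>' f" "i \<noteq> j" "f (axis j s) $ k \<noteq> 0"
  shows "rinner (\<alpha>'$k) (\<beta>$i) = rzero"
proof (rule cpow_exponent_inj)
  fix t :: complex
  assume t: "t \<noteq> 0"
  have "act \<alpha> (cochar (\<beta>$i) t) (axis j s) = axis j s"
    using assms(1,3) t by (auto simp: vec_eq_iff axis_def chr_cochar_dual)
  then have "act \<alpha>' (cochar (\<beta>$i) t) (f (axis j s)) = f (axis j s)"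
    using assms(2) cochar_in_torus[OF t] unfolding equivariant_def by metis
  then have "chr (\<alpha>'$k) (cochar (\<beta>$i) t) = 1"
    using assms(4) by (metis act_nth mult_cancel_right2)
  then show "cpow t (rinner (\<alpha>'$k) (\<beta>$i)) = cpow t rzero"
    using t by (simp add: chr_cochar)
qed

lemma equivariant_axis_scaling:
  fixes \<alpha> \<alpha>' \<beta> :: "(rr^'n::finite)^'n"
  assumes "dual \<alpha> \<beta>" "equivariant \<alpha> \<alpha>' f" "s \<noteq> 0"
  shows "f (axis j s) $ k = cpow s (rinner (\<alpha>'$k) (\<beta>$j)) * f (axis j 1) $ k"
proof -
  have "act \<alpha> (cochar (\<beta>$j) s) (axis j 1) = axis j s"
    using assms(1,3) by (auto simp: vec_eq_iff axis_def chr_cochar_dual)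
  then have "f (axis j s) = act \<alpha>' (cochar (\<beta>$j) s) (f (axis j 1))"
    using assms(2) cochar_in_torus[OF assms(3)] unfolding equivariant_def by metis
  then show ?thesis
    using assms(3) by (simp add: chr_cochar)
qed

lemma pairing_row_nonzero:
  fixes \<alpha> \<alpha>' \<beta> \<beta>' :: "(rr^'n::finite)^'n"
  assumes "faithful \<alpha>" "dual \<alpha> \<beta>" "dual \<alpha>' \<beta>'"
  shows "\<exists>j. rinner (\<alpha>'$k) (\<beta>$j) \<noteq> rzero"
proof (rule ccontr)
  assume "\<not> (\<exists>j. rinner (\<alpha>'$k) (\<beta>$j) \<noteq> rzero)"
  then have "chr (\<alpha>'$k) (cochar (\<beta>'$k) 2) = 1"
    using chr_eq_prod_cpow[OF assms(1,2) cochar_in_torus] by simp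
  then show False
    using chr_cochar_dual[OF assms(3)] by simp
qed

lemma permutation_of_row_supports:
  fixes P :: "'n::finite \<Rightarrow> 'n \<Rightarrow> 'a::zero"
  assumes rows: "\<And>k. \<exists>j. P k j \<noteq> 0" and supported: "\<And>j. \<exists>k. \<forall>i. i \<noteq> j \<longrightarrow> P k i = 0"
  shows "\<exists>\<sigma>. \<sigma> permutes UNIV \<and> (\<forall>k j. P k j \<noteq> 0 \<longleftrightarrow> k = \<sigma> j)"
proof -
  obtain \<sigma> where \<sigma>: "\<And>j i. i \<noteq> j \<Longrightarrow> P (\<sigma> j) i = 0"
    using supported by metis
  have diagonal: "P (\<sigma> j) j \<noteq> 0" for j
    using rows[of "\<sigma> j"] \<sigma> by metis
  have "inj \<sigma>"
    by (metis \<sigma> diagonal injI)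
  then have perm: "\<sigma> permutes UNIV"
    by (intro bij_imp_permutes) (simp_all add: bij_def finite_UNIV_inj_surj)
  have "P k j \<noteq> 0 \<longleftrightarrow> k = \<sigma> j" for k j
    using diagonal \<sigma>[of j "inv \<sigma> k"] permutes_inverses(1)[OF perm, of k] by metis
  with perm show ?thesis
    by blast
qed

lemma equivariant_injection_monomial:
  fixes \<alpha> \<alpha>' \<beta> \<beta>' :: "(rr^'n::finite)^'n"
  assumes "faithful \<alpha>" "dual \<alpha> \<beta>" "dual \<alpha>' \<beta>'" "inj f" "equivariant \<alpha> \<alpha>' f"
  shows "\<exists>\<sigma> \<nu> c. \<sigma> permutes UNIV
    \<and> (\<forall>k j. rinner (\<alpha>'$k) (\<beta>$j) = (if k = \<sigma> j then \<nu> j else rzero))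
    \<and> (\<forall>j. c j \<noteq> 0) \<and> (\<forall>j s. f (axis j s) = axis (\<sigma> j) (cpow0 s (\<nu> j) * c j))"
proof -
  define P where "P k j = rinner (\<alpha>'$k) (\<beta>$j)" for k j
  have rows: "\<exists>j. P k j \<noteq> rzero" for k
    unfolding P_def by (rule pairing_row_nonzero[OF assms(1-3)])
  have row_support: "P k i = rzero" if "f (axis j s) $ k \<noteq> 0" "i \<noteq> j" for i j k s
    unfolding P_def using equivariant_axis_pairing_vanishes[OF assms(2,5)] that by blast
  have f0: "f 0 = 0"
    by (rule equivariant_map_zero[OF assms(3,5)])
  have axis_image_nonzero: "\<exists>k. f (axis j 1) $ k \<noteq> 0" for j
    using f0 \<open>inj f\<close> by (metis axis_eq_0_iff injD one_neq_zero vec_eq_iff zero_index)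
  then obtain \<sigma> where \<sigma>: "\<sigma> permutes UNIV" and P_nonzero_iff: "\<And>k j. P k j \<noteq> rzero \<longleftrightarrow> k = \<sigma> j"
    using permutation_of_row_supports[of P] rows row_support unfolding rzero_eq_0 by metis
  have axis_image: "f (axis j s) $ k = 0" if "k \<noteq> \<sigma> j" for j k s
    using row_support rows P_nonzero_iff that by metis
  define \<nu> where "\<nu> j = P (\<sigma> j) j" for j
  define c where "c j = f (axis j 1) $ \<sigma> j" for j
  have "\<forall>k j. P k j = (if k = \<sigma> j then \<nu> j else rzero)"
    using P_nonzero_iff by (auto simp: \<nu>_def)
  moreover have "c j \<noteq> 0" for j
    using axis_image_nonzero axis_image by (metis c_def)
  moreover have "f (axis j s) = axis (\<sigma> j) (cpow0 s (\<nu> j) * c j)" for j s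
  proof (cases "s = 0")
    case True
    then show ?thesis
      using f0 by (simp add: cpow0_def axis_eq_0_iff[THEN iffD2])
  next
    case False
    then show ?thesis
      using axis_image equivariant_axis_scaling[OF assms(2,5) False]
      by (auto simp: vec_eq_iff axis_def cpow0_def c_def \<nu>_def P_def)
  qed
  ultimately show ?thesis
    using \<sigma> unfolding P_def by blast
qed

lemma monomial_pairing_invertible:
  fixes \<alpha> \<alpha>' \<beta> \<beta>' :: "(rr^'n::finite)^'n"
  assumes "faithful \<alpha>" "dual \<alpha> \<beta>" "dual \<alpha>' \<beta>'" "\<sigma> permutes UNIV"
    and "\<And>k j. rinner (\<alpha>'$k) (\<beta>$j) = (if k = \<sigma> j then \<nu> j else rzero)"
  shows "rmult (\<nu> j) (rinner (\<alpha>$j) (\<beta>'$(\<sigma> j))) = rone"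
proof -
  have "rone = (\<Sum>i\<in>UNIV. rmult (rinner (\<alpha>'$(\<sigma> j)) (\<beta>$i)) (rinner (\<alpha>$i) (\<beta>'$(\<sigma> j))))"
    using dual_pairings_inverse[OF assms(1-3)] by simp
  also have "\<dots> = (\<Sum>i\<in>UNIV. if i = j then rmult (\<nu> j) (rinner (\<alpha>$j) (\<beta>'$(\<sigma> j))) else 0)"
    using permutes_inj[OF assms(4)]
    by (intro sum.cong) (auto simp: assms(5) rmult_rzero[unfolded rzero_eq_0] rzero_eq_0 dest: injD)
  finally show ?thesis
    by simp
qed

lemma monomial_data_of_equivariant_injection:
  fixes \<alpha> \<alpha>' \<beta> \<beta>' :: "(rr^'n::finite)^'n"
  assumes "faithful \<alpha>" "faithful \<alpha>'" "dual \<alpha> \<beta>" "dual \<alpha>' \<beta>'" "inj f" "equivariant \<alpha> \<alpha>' f"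
  obtains \<sigma> \<nu> \<mu> c where "\<sigma> permutes UNIV" "\<And>j. \<beta>'$(\<sigma> j) = rvmult (\<beta>$j) (\<mu> j)"
    "\<And>j. rmult (\<nu> j) (\<mu> j) = rone" "\<And>j. c j \<noteq> 0"
    "\<And>j s. f (axis j s) = axis (\<sigma> j) (cpow0 s (\<nu> j) * c j)"
proof -
  obtain \<sigma> \<nu> c where \<sigma>: "\<sigma> permutes UNIV"
    and pairing: "\<forall>k j. rinner (\<alpha>'$k) (\<beta>$j) = (if k = \<sigma> j then \<nu> j else rzero)"
    and c: "\<forall>j. c j \<noteq> 0" and on_axes: "\<forall>j s. f (axis j s) = axis (\<sigma> j) (cpow0 s (\<nu> j) * c j)"
    using equivariant_injection_monomial[OF assms(1,3,4,5,6)] by blast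
  define \<mu> where "\<mu> j = rinner (\<alpha>$j) (\<beta>'$(\<sigma> j))" for j
  have \<nu>\<mu>: "\<And>j. rmult (\<nu> j) (\<mu> j) = rone"
    unfolding \<mu>_def using monomial_pairing_invertible[OF assms(1,3,4) \<sigma>] pairing by blast
  then have "\<forall>j. \<beta>'$(\<sigma> j) = rvmult (\<beta>$j) (\<mu> j)"
    using rvmult_iff_monomial_pairing[OF assms(2,4)] pairing by blast
  then show ?thesis
    using that \<sigma> \<nu>\<mu> c on_axes by blast
qed

lemma has_derivative_left_inverse_injective:
  assumes "(\<phi> has_derivative D) (at x)" "\<psi> differentiable (at (\<phi> x))" "\<And>s. \<psi> (\<phi> s) = s"
    and "D y = 0"
  shows "y = 0"
proof -
  obtain E where E: "(\<psi> has_derivative E) (at (\<phi> x))"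
    using assms(2) unfolding differentiable_def by blast
  have "((\<lambda>s. \<psi> (\<phi> s)) has_derivative (\<lambda>y. E (D y))) (at x)"
    using has_derivative_compose[OF assms(1) E] .
  moreover have "((\<lambda>s. \<psi> (\<phi> s)) has_derivative (\<lambda>y. y)) (at x)"
    by (simp add: assms(3))
  ultimately have "(\<lambda>y. E (D y)) = (\<lambda>y. y)"
    by (rule has_derivative_unique)
  then show ?thesis
    using assms(4) linear_0[OF has_derivative_linear[OF E]] by metis
qed

text \<open>A real-linear derivative \<open>D\<close> commutes with real scalings, while homogeneity of \<open>\<phi>\<close> scales
  \<open>D\<close> by \<open>r\<^sup>m\<close>; so \<open>r\<^sup>m = r\<close> for all \<open>r > 0\<close>.\<close>

lemma fst_eq_1_if_homogeneous_differentiable: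
  fixes \<phi> :: "complex \<Rightarrow> complex"
  assumes D: "(\<phi> has_derivative D) (at 0)" and "D 1 \<noteq> 0"
    and homogeneous: "\<And>r x. 0 < r \<Longrightarrow> \<phi> (of_real r * x) = cpow (of_real r) m * \<phi> x"
  shows "fst m = 1"
proof -
  have "cpow (of_real r) m = of_real r" if r: "0 < r" for r
  proof -
    have "((\<lambda>x. \<phi> (of_real r * x)) has_derivative (\<lambda>x. D (of_real r * x))) (at 0)"
      using has_derivative_compose[OF has_derivative_mult_right[OF has_derivative_ident,
            of "of_real r" "at 0"], of \<phi> D] D
      by simp
    moreover have "((\<lambda>x. \<phi> (of_real r * x)) has_derivative (\<lambda>x. cpow (of_real r) m * D x)) (at 0)"
      unfolding homogeneous[OF r] by (rule has_derivative_mult_right[OF D])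
    ultimately have "D (of_real r * 1) = cpow (of_real r) m * D 1"
      by (metis has_derivative_unique)
    moreover have "D (of_real r * 1) = of_real r * D 1"
      using linear_scale[OF has_derivative_linear[OF D], of r 1] by (simp add: scaleR_conv_of_real)
    ultimately show ?thesis
      using \<open>D 1 \<noteq> 0\<close> by simp
  qed
  then have "exp ((fst m - 1) * of_real s) = 1" for s
    using cpow_of_real_pos[of "exp s" m] by (simp add: left_diff_distrib exp_diff exp_of_real)
  then have "fst m - 1 = 0"
    by (rule exp_mult_of_real_eq_1_imp_zero)
  then show ?thesis
    by simp
qed

lemma bounded_linear_axis: "bounded_linear (axis j :: 'a::euclidean_space \<Rightarrow> 'a^'n)"
  unfolding linear_conv_bounded_linear[symmetric] by (rule linearI) (simp_all add: axis_def vec_eq_iff)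

lemma axis_component_has_derivative:
  fixes f :: "'a::euclidean_space^'n \<Rightarrow> 'b::real_normed_vector^'m"
  assumes "(f has_derivative D) (at (axis j s))"
  shows "((\<lambda>s. f (axis j s) $ k) has_derivative (\<lambda>x. D (axis j x) $ k)) (at s)"
  by (rule bounded_linear.has_derivative[OF bounded_linear_vec_nth])
    (rule has_derivative_compose[OF bounded_linear_imp_has_derivative[OF bounded_linear_axis] assms])

lemma Re_exponent_pos_if_continuous:
  fixes f :: "complex^'n \<Rightarrow> complex^'n"
  assumes "continuous_on UNIV f" "\<And>s. f (axis j s) = axis k (cpow0 s \<nu> * c)" "c \<noteq> 0"
  shows "Re (fst \<nu>) > 0"
proof (rule isCont_cpow0_imp_Re_pos)
  have "continuous_on UNIV (\<lambda>s. f (axis j s))"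
    by (rule continuous_on_compose2[OF assms(1) linear_continuous_on[OF bounded_linear_axis]]) auto
  then have "continuous_on UNIV (\<lambda>s. f (axis j s) $ k / c)"
    using assms(3) by (intro continuous_on_divide continuous_on_component continuous_on_const) auto
  then show "isCont (\<lambda>s. cpow0 s \<nu>) 0"
    using assms(2,3) by (simp add: continuous_on_eq_continuous_at)
qed

lemma fst_exponent_eq_1_if_diffeomorphic:
  fixes f h :: "complex^'n \<Rightarrow> complex^'n"
  assumes "\<And>x. f differentiable (at x)" "\<And>x. h differentiable (at x)" "\<And>x. h (f x) = x"
    and on_axis: "\<And>s. f (axis j s) = axis k (cpow0 s \<nu> * c)"
  shows "fst \<nu> = 1"
proof -
  define \<phi> where "\<phi> s = f (axis j s) $ k" for s
  have \<phi>: "\<phi> s = cpow0 s \<nu> * c" for s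
    by (simp add: \<phi>_def on_axis)
  obtain Df where "(f has_derivative Df) (at (axis j 0))"
    using assms(1) unfolding differentiable_def by blast
  then have D: "(\<phi> has_derivative (\<lambda>x. Df (axis j x) $ k)) (at 0)"
    unfolding \<phi>_def by (rule axis_component_has_derivative)
  obtain Dh where "(h has_derivative Dh) (at (axis k (\<phi> 0)))"
    using assms(2) unfolding differentiable_def by blast
  then have "(\<lambda>w. h (axis k w) $ j) differentiable (at (\<phi> 0))"
    unfolding differentiable_def by (blast intro: axis_component_has_derivative)
  moreover have "h (axis k (\<phi> s)) $ j = s" for s
    by (simp add: \<phi> assms(3) flip: on_axis)
  ultimately have "Df (axis j 1) $ k \<noteq> 0"
    using has_derivative_left_inverse_injective[OF D] by (metis one_neq_zero)
  moreover have "\<phi> (of_real r * x) = cpow (of_real r) \<nu> * \<phi> x" if "0 < r" for r x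
    using that by (simp add: \<phi> cpow0_mult)
  ultimately show ?thesis
    by (rule fst_eq_1_if_homogeneous_differentiable[OF D])
qed

lemma rvmult_Sset_if_equiv_homeomorphic:
  fixes \<alpha> \<alpha>' \<beta> \<beta>' :: "(rr^'n::finite)^'n"
  assumes "faithful \<alpha>" "faithful \<alpha>'" "dual \<alpha> \<beta>" "dual \<alpha>' \<beta>'" "equiv_homeomorphic \<alpha> \<alpha>'"
  shows "\<exists>\<sigma> \<mu>. \<sigma> permutes UNIV \<and> (\<forall>i. \<mu> i \<in> Sset \<and> \<beta>'$(\<sigma> i) = rvmult (\<beta>$i) (\<mu> i))"
proof -
  obtain f h where "homeomorphism UNIV UNIV f h" and equivariant: "equivariant \<alpha> \<alpha>' f"
    using assms(5) unfolding equiv_homeomorphic_def by blast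
  then have "inj f" and f: "continuous_on UNIV f"
    unfolding homeomorphism_def by (auto intro: inj_on_inverseI)
  obtain \<sigma> \<nu> \<mu> c where "\<sigma> permutes UNIV" "\<And>j. \<beta>'$(\<sigma> j) = rvmult (\<beta>$j) (\<mu> j)"
    and \<nu>\<mu>: "\<And>j. rmult (\<nu> j) (\<mu> j) = rone" and "\<And>j. c j \<noteq> 0"
    and "\<And>j s. f (axis j s) = axis (\<sigma> j) (cpow0 s (\<nu> j) * c j)"
    using monomial_data_of_equivariant_injection[OF assms(1-4) \<open>inj f\<close> equivariant] by metis
  moreover have "\<mu> j \<in> Sset" for j
    using Sset_iff_Re_inverse_pos[OF rmult_right_inverse_imp_left[OF \<nu>\<mu>]]
      Re_exponent_pos_if_continuous[OF f] calculation by metis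
  ultimately show ?thesis
    by blast
qed

lemma rvmult_mu0_if_equiv_diffeomorphic:
  fixes \<alpha> \<alpha>' \<beta> \<beta>' :: "(rr^'n::finite)^'n"
  assumes "faithful \<alpha>" "faithful \<alpha>'" "dual \<alpha> \<beta>" "dual \<alpha>' \<beta>'" "equiv_diffeomorphic \<alpha> \<alpha>'"
  shows "\<exists>\<sigma>. \<sigma> permutes UNIV \<and> (\<forall>i. \<beta>'$(\<sigma> i) = \<beta>$i \<or> \<beta>'$(\<sigma> i) = rvmult (\<beta>$i) mu0)"
proof -
  obtain f h where "smooth f" "smooth h" and hf: "\<And>x. h (f x) = x" and equivariant: "equivariant \<alpha> \<alpha>' f"
    using assms(5) unfolding equiv_diffeomorphic_def by blast
  then have df: "\<And>x. f differentiable (at x)" and dh: "\<And>x. h differentiable (at x)"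
    by (simp_all add: smooth_imp_differentiable)
  have "inj f"
    by (metis hf injI)
  obtain \<sigma> \<nu> \<mu> c where \<sigma>: "\<sigma> permutes UNIV" and \<beta>': "\<And>j. \<beta>'$(\<sigma> j) = rvmult (\<beta>$j) (\<mu> j)"
    and \<nu>\<mu>: "\<And>j. rmult (\<nu> j) (\<mu> j) = rone"
    and on_axes: "\<And>j s. f (axis j s) = axis (\<sigma> j) (cpow0 s (\<nu> j) * c j)"
    using monomial_data_of_equivariant_injection[OF assms(1-4) \<open>inj f\<close> equivariant] by metis
  have "\<mu> j = rone \<or> \<mu> j = mu0" for j
    using rmult_eq_rone_fst_1[OF \<nu>\<mu> fst_exponent_eq_1_if_diffeomorphic[OF df dh hf on_axes]] .
  then show ?thesis
    using \<sigma> \<beta>' by (metis rvmult_rone)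
qed

theorem lemma2p7:
  fixes \<alpha> \<alpha>' \<beta> \<beta>' :: "(rr^'n::finite)^'n"
  assumes "faithful \<alpha>" and "faithful \<alpha>'"
    and "dual \<alpha> \<beta>" and "dual \<alpha>' \<beta>'"
  shows "(equiv_diffeomorphic \<alpha> \<alpha>' \<longleftrightarrow>
           (\<exists>\<sigma>. \<sigma> permutes (UNIV :: 'n set) \<and>
              (\<forall>i. \<beta>'$(\<sigma> i) = \<beta>$i \<or> \<beta>'$(\<sigma> i) = rvmult (\<beta>$i) mu0))) \<and>
         (equiv_homeomorphic \<alpha> \<alpha>' \<longleftrightarrow>
           (\<exists>\<sigma> \<mu>. \<sigma> permutes (UNIV :: 'n set) \<and>
              (\<forall>i. \<mu> i \<in> Sset \<and> \<beta>'$(\<sigma> i) = rvmult (\<beta>$i) (\<mu> i))))"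
  using rvmult_mu0_if_equiv_diffeomorphic[OF assms] equiv_diffeomorphic_if_rvmult_mu0[OF assms]
    rvmult_Sset_if_equiv_homeomorphic[OF assms] equiv_homeomorphic_if_rvmult_Sset[OF assms]
  by blast

end
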